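(* Let $H$ be a diagonal Hamiltonian on $n$ qubits with real diagonal entries $H_{z,z}$, $z\in\{0,1\}^n$. Let $\delta:=\max_{\ell\in\mathbb{R}}|\{z\in\{0,1\}^n: H_{z,z}=\ell\}|/2^n$. Fix arbitrary real parameters $\beta_1,\gamma_1,\beta_2,\gamma_2,\dots$, and for $p\ge 0$ let $\ket{\psi_p}=\sum_z \alpha_{p,z}\ket{z}$ be the QAOA state of depth $p$, $$\ket{\psi_p}=\Big[\prod_{i=1}^{p}U_B(\beta_i)U_C(\gamma_i)\Big]\mathrm{Had}^{\otimes n}\ket{0}^{\otimes n},$$ where $U_C(\gamma)=e^{-i\gamma H}$, $U_B(\beta)=e^{-i\beta\sum_{k=1}^n\sigma_X^k}=(e^{-i\beta\sigma_X})^{\otimes n}$, $\mathrm{Had}$ is the Hadamard gate, and the product is ordered so that $U_B(\beta_1)U_C(\gamma_1)$ is applied first. For $p\ge0$ let $\Delta_p:=\min_{t\le p}\max_{u\in\mathbb{C}}|\{z\in\{0,1\}^n:\alpha_{t,z}=u\}|/2^n$. Then $\Delta_0=1$, and for every $p\ge1$ and every $z\in\{0,1\}^n$, $$|\alpha_{p,z}|\le\big(2^{n+1}(2-\Delta_{p-1}-\delta)+1\big)^{p}\,\frac{1}{\sqrt{2^n}}.$$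
   Context: $\sigma_X^k$ denotes the Pauli X matrix $\begin{pmatrix}0&1\\1&0\end{pmatrix}$ acting on qubit $k$. $\delta$ is the maximum fraction of computational basis states sharing the same diagonal value of $H$; $\Delta_p$ is the minimum over depths $t\le p$ of the maximum fraction of amplitudes of $\ket{\psi_t}$ that are all equal to a common complex value. *)

theory Defs
  imports "HOL-Analysis.Analysis"
begin

definition bitstrings :: "nat \<Rightarrow> bool list set" where
  "bitstrings n = {z. length z = n}"

type_synonym state = "bool list \<Rightarrow> complex"

text \<open>Phase separator U_C(gamma) = exp(-i gamma H), H diagonal with entries H z.\<close>
definition U_C :: "(bool list \<Rightarrow> real) \<Rightarrow> real \<Rightarrow> state \<Rightarrow> state" where
  "U_C H g \<psi> = (\<lambda>z. cis (- g * H z) * \<psi> z)"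

text \<open>Single-qubit gate exp(-i beta sigma_X) = cos beta I - i sin beta sigma_X, matrix entry (a,b).\<close>
definition RX :: "real \<Rightarrow> bool \<Rightarrow> bool \<Rightarrow> complex" where
  "RX b x y = (if x = y then complex_of_real (cos b) else - \<i> * complex_of_real (sin b))"

text \<open>Mixer U_B(beta) = (exp(-i beta sigma_X)) tensor-power n, acting on states of n qubits.\<close>
definition U_B :: "nat \<Rightarrow> real \<Rightarrow> state \<Rightarrow> state" where
  "U_B n b \<psi> = (\<lambda>z. \<Sum>w\<in>bitstrings n. (\<Prod>k<n. RX b (z ! k) (w ! k)) * \<psi> w)"

text \<open>QAOA amplitudes alpha_{p,z}; psi_0 = Had^n |0...0>, psi_p = U_B(beta_p) U_C(gamma_p) psi_{p-1}.\<close>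
fun qaoa :: "nat \<Rightarrow> (bool list \<Rightarrow> real) \<Rightarrow> (nat \<Rightarrow> real) \<Rightarrow> (nat \<Rightarrow> real) \<Rightarrow> nat \<Rightarrow> state" where
  "qaoa n H beta gamma 0 = (\<lambda>z. complex_of_real (1 / sqrt (2 ^ n)))"
| "qaoa n H beta gamma (Suc p) =
     U_B n (beta (Suc p)) (U_C H (gamma (Suc p)) (qaoa n H beta gamma p))"

definition delta :: "nat \<Rightarrow> (bool list \<Rightarrow> real) \<Rightarrow> real" where
  "delta n H = (SUP l::real. real (card {z \<in> bitstrings n. H z = l}) / 2 ^ n)"

definition Delta :: "nat \<Rightarrow> (bool list \<Rightarrow> real) \<Rightarrow> (nat \<Rightarrow> real) \<Rightarrow> (nat \<Rightarrow> real) \<Rightarrow> nat \<Rightarrow> real" where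
  "Delta n H beta gamma p = Min ((\<lambda>t. SUP u::complex.
      real (card {z \<in> bitstrings n. qaoa n H beta gamma t z = u}) / 2 ^ n) ` {..p})"

end

theory Submission imports Defs begin

text \<open>
  Write \<open>\<psi>\<close> for the state before a layer and \<open>A\<close>, \<open>B\<close> for the largest level sets of its
  amplitudes and of \<open>H\<close>. On \<open>A \<inter> B\<close> the state after the phase separator is a constant \<open>c\<close>, and
  \<open>A \<inter> B\<close> misses at most \<open>2\<^sup>n (2 - \<Delta> - \<delta>)\<close> basis states. Every row of the mixer has entries
  of modulus at most 1 and a row sum of modulus exactly 1 (it factorises as
  \<open>(cos \<beta> - i sin \<beta>)\<^sup>n\<close>), so the mixer maps the constant part \<open>c\<close> to a vector of modulus
  \<open>|c|\<close> and each of the remaining basis states contributes at most \<open>2 max |\<psi>|\<close>. Hence one layer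
  multiplies the maximal amplitude by at most \<open>2\<^sup>n\<^sup>+\<^sup>1 (2 - \<Delta> - \<delta>) + 1\<close>, and \<open>\<Delta>\<close> only decreases
  with the depth.
\<close>

lemma finite_bitstrings: "finite (bitstrings n)"
  using finite_lists_length_eq[of "UNIV :: bool set" n] by (simp add: bitstrings_def)

lemma card_bitstrings: "card (bitstrings n) = 2 ^ n"
  using card_lists_length_eq[of "UNIV :: bool set" n] by (simp add: bitstrings_def)

lemma replicate_in_bitstrings: "replicate n b \<in> bitstrings n"
  by (simp add: bitstrings_def)

lemma sum_bitstrings_prod:
  fixes g :: "nat \<Rightarrow> bool \<Rightarrow> 'a :: comm_semiring_1"
  shows "(\<Sum>w\<in>bitstrings n. \<Prod>k<n. g k (w ! k)) = (\<Prod>k<n. g k True + g k False)"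
proof (induction n arbitrary: g)
  case 0
  have "bitstrings 0 = {[]}" by (auto simp: bitstrings_def)
  then show ?case by simp
next
  case (Suc n)
  have bs: "bitstrings (Suc n) = (\<lambda>(b, w). b # w) ` (UNIV \<times> bitstrings n)"
    by (auto simp: bitstrings_def image_iff length_Suc_conv)
  have inj: "inj_on (\<lambda>(b, w). b # w) (UNIV \<times> bitstrings n)"
    by (auto simp: inj_on_def)
  have "(\<Sum>w\<in>bitstrings (Suc n). \<Prod>k<Suc n. g k (w ! k))
      = (\<Sum>(b, w)\<in>UNIV \<times> bitstrings n. \<Prod>k<Suc n. g k ((b # w) ! k))"
    unfolding bs by (subst sum.reindex[OF inj]) (simp add: case_prod_unfold)
  also have "\<dots> = (\<Sum>(b, w)\<in>UNIV \<times> bitstrings n. g 0 b * (\<Prod>k<n. g (Suc k) (w ! k)))"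
    by (rule sum.cong) (auto simp only: prod.lessThan_Suc_shift nth_Cons_0 nth_Cons_Suc)
  also have "\<dots> = (\<Sum>b\<in>UNIV. g 0 b * (\<Prod>k<n. g (Suc k) True + g (Suc k) False))"
    by (simp add: sum.cartesian_product[symmetric] sum_distrib_left[symmetric]
        Suc.IH[of "\<lambda>k. g (Suc k)"])
  also have "\<dots> = (\<Prod>k<Suc n. g k True + g k False)"
    by (simp only: prod.lessThan_Suc_shift UNIV_bool) (simp add: algebra_simps)
  finally show ?case .
qed

definition max_level_fraction :: "nat \<Rightarrow> (bool list \<Rightarrow> 'a) \<Rightarrow> real" where
  "max_level_fraction n g = (SUP u. real (card {z \<in> bitstrings n. g z = u}) / 2 ^ n)"

lemma delta_eq_max_level_fraction: "delta n H = max_level_fraction n H"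
  by (simp add: delta_def max_level_fraction_def)

lemma Delta_eq_Min_max_level_fraction:
  "Delta n H beta gamma p = Min ((\<lambda>t. max_level_fraction n (qaoa n H beta gamma t)) ` {..p})"
  by (simp add: Delta_def max_level_fraction_def)

lemma card_level_set_le: "card {z \<in> bitstrings n. g z = u} \<le> 2 ^ n"
  using card_mono[OF finite_bitstrings, of "{z \<in> bitstrings n. g z = u}" n]
  by (auto simp: card_bitstrings)

lemma finite_range_level_fraction:
  "finite (range (\<lambda>u. real (card {z \<in> bitstrings n. g z = u}) / 2 ^ n))"
  by (rule finite_subset[of _ "(\<lambda>k. real k / 2 ^ n) ` {..2 ^ n}"])
    (auto intro: card_level_set_le)

lemma level_fraction_le_max_level_fraction:
  "real (card {z \<in> bitstrings n. g z = u}) / 2 ^ n \<le> max_level_fraction n g"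
  unfolding max_level_fraction_def
  by (rule cSUP_upper) (auto intro: bdd_above_finite[OF finite_range_level_fraction])

lemma max_level_fraction_attained:
  obtains u where "max_level_fraction n g = real (card {z \<in> bitstrings n. g z = u}) / 2 ^ n"
proof -
  let ?R = "range (\<lambda>u. real (card {z \<in> bitstrings n. g z = u}) / 2 ^ n)"
  have "Max ?R \<in> ?R"
    using finite_range_level_fraction by (intro Max_in) auto
  moreover have "Sup ?R = Max ?R"
    using finite_range_level_fraction by (intro cSup_eq_Max) auto
  ultimately have "max_level_fraction n g \<in> ?R"
    by (simp add: max_level_fraction_def)
  then show ?thesis using that by auto
qed

lemma max_level_fraction_le_1: "max_level_fraction n g \<le> 1"
proof -
  obtain u where "max_level_fraction n g = real (card {z \<in> bitstrings n. g z = u}) / 2 ^ n"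
    by (rule max_level_fraction_attained)
  then show ?thesis using card_level_set_le[of n g u] by simp
qed

lemma max_level_fraction_const: "max_level_fraction n (\<lambda>_. c) = 1"
proof (rule antisym[OF max_level_fraction_le_1])
  show "1 \<le> max_level_fraction n (\<lambda>_. c)"
    using level_fraction_le_max_level_fraction[of n "\<lambda>_. c" c] by (simp add: card_bitstrings)
qed

lemma Delta_0: "Delta n H beta gamma 0 = 1"
  by (simp add: Delta_eq_Min_max_level_fraction max_level_fraction_const)

lemma Delta_le_max_level_fraction:
  "t \<le> p \<Longrightarrow> Delta n H beta gamma p \<le> max_level_fraction n (qaoa n H beta gamma t)"
  unfolding Delta_eq_Min_max_level_fraction by (rule Min_le) auto

lemma Delta_le_1: "Delta n H beta gamma p \<le> 1"
  using Delta_le_max_level_fraction[of p p] max_level_fraction_le_1 order_trans by blast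

lemma Delta_antimono: "j \<le> q \<Longrightarrow> Delta n H beta gamma q \<le> Delta n H beta gamma j"
  unfolding Delta_eq_Min_max_level_fraction by (rule Min_antimono) auto

lemma card_Diff_Int_le:
  assumes "finite X" "A \<subseteq> X" "B \<subseteq> X"
  shows "card (X - A \<inter> B) + card A + card B \<le> 2 * card X"
proof -
  have fin: "finite A" "finite B" using assms finite_subset by auto
  have "card (A \<union> B) + card (A \<inter> B) = card A + card B"
    using fin by (rule card_Un_Int[symmetric])
  moreover have "card (A \<union> B) \<le> card X" "card (A \<inter> B) \<le> card X"
    using assms by (auto intro: card_mono)
  moreover have "card (X - A \<inter> B) = card X - card (A \<inter> B)"
    using assms fin by (intro card_Diff_subset) auto
  ultimately show ?thesis by linarith
qed

lemma norm_U_C [simp]: "cmod (U_C H g \<psi> z) = cmod (\<psi> z)"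
  by (simp add: U_C_def norm_mult)

lemma norm_RX_le_1: "cmod (RX b x y) \<le> 1"
  by (auto simp: RX_def norm_mult abs_cos_le_one abs_sin_le_one)

lemma norm_RX_row_sum: "cmod (RX b x True + RX b x False) = 1"
proof -
  have "RX b x True + RX b x False = Complex (cos b) (- sin b)"
    by (cases x) (auto simp: RX_def complex_eq_iff)
  then show ?thesis by (simp add: cmod_def)
qed

lemma norm_U_B_entry_le_1: "cmod (\<Prod>k<n. RX b (z ! k) (w ! k)) \<le> 1"
  unfolding prod_norm[symmetric] by (rule prod_le_1) (auto simp: norm_RX_le_1)

lemma norm_U_B_row_sum:
  "cmod (\<Sum>w\<in>bitstrings n. \<Prod>k<n. RX b (z ! k) (w ! k)) = 1"
  by (simp add: sum_bitstrings_prod[of "\<lambda>k. RX b (z ! k)"] prod_norm[symmetric] norm_RX_row_sum)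

lemma norm_U_B_le_const_off:
  assumes bound: "\<And>w. w \<in> bitstrings n \<Longrightarrow> cmod (\<psi> w) \<le> K"
    and c: "cmod c \<le> K"
    and const: "\<And>w. w \<in> bitstrings n - S \<Longrightarrow> \<psi> w = c"
    and S: "S \<subseteq> bitstrings n"
  shows "cmod (U_B n b \<psi> z) \<le> K * (1 + 2 * real (card S))"
proof -
  define P where "P w = (\<Prod>k<n. RX b (z ! k) (w ! k))" for w
  have K: "0 \<le> K" using c norm_ge_zero order_trans by blast
  have "U_B n b \<psi> z = c * (\<Sum>w\<in>bitstrings n. P w) + (\<Sum>w\<in>bitstrings n. P w * (\<psi> w - c))"
    by (simp add: U_B_def P_def sum_distrib_left sum.distrib[symmetric] algebra_simps)
  also have "(\<Sum>w\<in>bitstrings n. P w * (\<psi> w - c)) = (\<Sum>w\<in>S. P w * (\<psi> w - c))"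
    using S const by (intro sum.mono_neutral_right[OF finite_bitstrings]) auto
  finally have split: "U_B n b \<psi> z = c * (\<Sum>w\<in>bitstrings n. P w) + (\<Sum>w\<in>S. P w * (\<psi> w - c))" .
  have deviation: "cmod (P w * (\<psi> w - c)) \<le> 2 * K" if "w \<in> S" for w
  proof -
    have "cmod (\<psi> w - c) \<le> 2 * K"
      using bound[of w] c S that norm_triangle_ineq4[of "\<psi> w" c] by auto
    moreover have "cmod (P w) \<le> 1"
      unfolding P_def by (rule norm_U_B_entry_le_1)
    ultimately show ?thesis
      unfolding norm_mult using mult_mono[of "cmod (P w)" 1 "cmod (\<psi> w - c)" "2 * K"] K by simp
  qed
  have "cmod (\<Sum>w\<in>S. P w * (\<psi> w - c)) \<le> (\<Sum>w\<in>S. cmod (P w * (\<psi> w - c)))"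
    by (rule norm_sum)
  also have "\<dots> \<le> (\<Sum>w\<in>S. 2 * K)"
    by (rule sum_mono[OF deviation])
  finally have off: "cmod (\<Sum>w\<in>S. P w * (\<psi> w - c)) \<le> 2 * K * real (card S)"
    by (simp add: mult_ac)
  have const_part: "cmod (c * (\<Sum>w\<in>bitstrings n. P w)) \<le> K"
    using c by (simp add: norm_mult P_def norm_U_B_row_sum)
  have "cmod (U_B n b \<psi> z) \<le> K + 2 * K * real (card S)"
    unfolding split by (rule order_trans[OF norm_triangle_ineq add_mono[OF const_part off]])
  then show ?thesis by (simp add: algebra_simps)
qed

lemma norm_qaoa_Suc_le:
  assumes bound: "\<And>w. w \<in> bitstrings n \<Longrightarrow> cmod (qaoa n H beta gamma j w) \<le> K"
    and z: "z \<in> bitstrings n"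
  shows "cmod (qaoa n H beta gamma (Suc j) z)
     \<le> K * (2 ^ (n + 1) * (2 - Delta n H beta gamma j - delta n H) + 1)"
proof -
  define \<psi> where "\<psi> = qaoa n H beta gamma j"
  define \<phi> where "\<phi> = U_C H (gamma (Suc j)) \<psi>"
  obtain u where u: "max_level_fraction n \<psi> = real (card {w \<in> bitstrings n. \<psi> w = u}) / 2 ^ n"
    by (rule max_level_fraction_attained)
  obtain l where l: "max_level_fraction n H = real (card {w \<in> bitstrings n. H w = l}) / 2 ^ n"
    by (rule max_level_fraction_attained)
  define A where "A = {w \<in> bitstrings n. \<psi> w = u}"
  define B where "B = {w \<in> bitstrings n. H w = l}"
  define S where "S = bitstrings n - A \<inter> B"
  have "Delta n H beta gamma j * 2 ^ n \<le> max_level_fraction n \<psi> * 2 ^ n"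
    unfolding \<psi>_def by (intro mult_right_mono Delta_le_max_level_fraction) auto
  also have "\<dots> = real (card A)"
    using u by (simp add: A_def)
  finally have "Delta n H beta gamma j * 2 ^ n \<le> real (card A)" .
  moreover have "delta n H * 2 ^ n \<le> real (card B)"
    using l by (simp add: delta_eq_max_level_fraction B_def)
  moreover have "card S + card A + card B \<le> 2 * 2 ^ n"
    using card_Diff_Int_le[OF finite_bitstrings, of A n B]
    by (simp add: S_def A_def B_def card_bitstrings)
  then have "real (card S + card A + card B) \<le> real (2 * 2 ^ n)"
    by (rule of_nat_mono)
  then have "real (card S) + real (card A) + real (card B) \<le> 2 * 2 ^ n"
    by simp
  ultimately have "real (card S) \<le> 2 * 2 ^ n - Delta n H beta gamma j * 2 ^ n - delta n H * 2 ^ n"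
    by linarith
  then have card_S: "real (card S) \<le> 2 ^ n * (2 - Delta n H beta gamma j - delta n H)"
    by (simp add: algebra_simps)
  have \<phi>_on_AB: "\<phi> w = cis (- gamma (Suc j) * l) * u" if "w \<in> A \<inter> B" for w
    using that by (simp add: \<phi>_def U_C_def A_def B_def)
  obtain w0 where w0: "w0 \<in> bitstrings n" and const: "\<And>w. w \<in> bitstrings n - S \<Longrightarrow> \<phi> w = \<phi> w0"
  proof (cases "A \<inter> B = {}")
    case True
    then show ?thesis using that[OF replicate_in_bitstrings] by (simp add: S_def)
  next
    case False
    then obtain w0 where "w0 \<in> A \<inter> B" by blast
    then show ?thesis using that[of w0] \<phi>_on_AB by (auto simp: S_def A_def)
  qed
  have "cmod (qaoa n H beta gamma (Suc j) z) \<le> K * (1 + 2 * real (card S))"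
    unfolding qaoa.simps
    by (rule norm_U_B_le_const_off[where c = "\<phi> w0" and S = S])
      (use bound w0 const in \<open>auto simp: \<phi>_def \<psi>_def S_def\<close>)
  also have "\<dots> \<le> K * (2 ^ (n + 1) * (2 - Delta n H beta gamma j - delta n H) + 1)"
    using card_S order_trans[OF norm_ge_zero bound[OF z]] by (intro mult_left_mono) auto
  finally show ?thesis .
qed

lemma norm_qaoa_le:
  assumes "j \<le> Suc q" and "z \<in> bitstrings n"
  shows "cmod (qaoa n H beta gamma j z)
     \<le> (2 ^ (n + 1) * (2 - Delta n H beta gamma q - delta n H) + 1) ^ j * (1 / sqrt (2 ^ n))"
  using assms
proof (induction j arbitrary: z)
  case 0
  then show ?case by (simp add: norm_divide)
next
  case (Suc j)
  let ?G = "\<lambda>t. 2 ^ (n + 1) * (2 - Delta n H beta gamma t - delta n H) + (1 :: real)"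
  let ?K = "?G q ^ j * (1 / sqrt (2 ^ n))"
  have "0 \<le> ?G q"
    using Delta_le_1[of n H beta gamma q] max_level_fraction_le_1[of n H]
    by (simp add: delta_eq_max_level_fraction)
  then have K: "0 \<le> ?K" by simp
  have "cmod (qaoa n H beta gamma (Suc j) z) \<le> ?K * ?G j"
    using Suc by (intro norm_qaoa_Suc_le) auto
  also have "\<dots> \<le> ?K * ?G q"
    using Delta_antimono[of j q n H beta gamma] Suc.prems K by (intro mult_left_mono) auto
  also have "\<dots> = ?G q ^ Suc j * (1 / sqrt (2 ^ n))"
    by (simp only: power_Suc mult_ac)
  finally show ?case .
qed

theorem proposition2:
  fixes n :: nat and H :: "bool list \<Rightarrow> real" and beta gamma :: "nat \<Rightarrow> real"
  shows "Delta n H beta gamma 0 = 1 \<and>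
    (\<forall>p\<ge>1. \<forall>z\<in>bitstrings n.
      cmod (qaoa n H beta gamma p z)
        \<le> (2 ^ (n + 1) * (2 - Delta n H beta gamma (p - 1) - delta n H) + 1) ^ p
           * (1 / sqrt (2 ^ n)))"
  using Delta_0 norm_qaoa_le[of p "p - 1" for p] by auto

end
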